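(* Let $\{\widehat X_n(x):x\in\mathbb{R}^2\}_{n\ge0}$ be an i.i.d. sequence of random fields whose variables $\widehat X_n(x)$ are all mutually independent with standard Fréchet distribution. Set $X_n(x)=\tfrac23\widehat X_n(x)\vee\tfrac13\widehat X_{n-1}(x)$, let $\{Z_n\}_{n\ge1}$ be i.i.d. standard Fréchet random variables independent of $\{\widehat X_n\}$, set $Z_n(x)=Z_n$ for all $x$, let $\alpha:\mathbb{R}^2\to(0,\infty)$, and $Y_n(x)=X_n(x)\vee Z_n^{1/\alpha(x)}$. Then for all $n\ge1$ and $x\in\mathbb{R}^2$, $r\ge1$: $$\lambda(Y_{n+r}(x)\mid Y_n(x))=\begin{cases}0,& \alpha(x)<1 \text{ or } r>1,\\ 1/6,& \alpha(x)=1\text{ and } r=1,\\ 1/3,& \alpha(x)>1 \text{ and } r=1;\end{cases}$$ for $x\neq x'$ and $r\ge1$, $\lambda(Y_{n+r}(x')\mid Y_n(x))=0$; and for $x\ne x'$, $$\lambda(Y_n(x')\mid Y_n(x))=\begin{cases}1,& \alpha(x')\le\alpha(x)<1,\\ 1/2,& \alpha(x')\le\alpha(x)=1,\\ 0,&\text{otherwise.}\end{cases}$$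
   Context: A random variable has the standard (unit) Fréchet distribution if $P(\cdot\le z)=e^{-1/z}$ for $z>0$. For random variables $U,V$, the tail dependence coefficient is $\lambda(V\mid U)=\lim_{y\to\infty}P(V>y\mid U>y)$. $a\vee b=\max(a,b)$. *)

theory Defs
  imports "HOL-Probability.Probability"
begin

definition std_frechet :: "'a measure \<Rightarrow> ('a \<Rightarrow> real) \<Rightarrow> bool" where
  "std_frechet M V \<longleftrightarrow> V \<in> borel_measurable M \<and>
     (\<forall>z>0. measure M {\<omega> \<in> space M. V \<omega> \<le> z} = exp (- 1 / z))"

definition tail_dep :: "'a measure \<Rightarrow> ('a \<Rightarrow> real) \<Rightarrow> ('a \<Rightarrow> real) \<Rightarrow> real \<Rightarrow> bool" where
  "tail_dep M V U L \<longleftrightarrow>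
     ((\<lambda>y. measure M {\<omega> \<in> space M. V \<omega> > y \<and> U \<omega> > y}
            / measure M {\<omega> \<in> space M. U \<omega> > y}) \<longlongrightarrow> L) at_top"

definition Xfield :: "(nat \<Rightarrow> real^2 \<Rightarrow> 'a \<Rightarrow> real) \<Rightarrow> nat \<Rightarrow> real^2 \<Rightarrow> 'a \<Rightarrow> real" where
  "Xfield Xh n x \<omega> = max (2/3 * Xh n x \<omega>) (1/3 * Xh (n - 1) x \<omega>)"

definition Yfield :: "(nat \<Rightarrow> real^2 \<Rightarrow> 'a \<Rightarrow> real) \<Rightarrow> (nat \<Rightarrow> 'a \<Rightarrow> real) \<Rightarrow> (real^2 \<Rightarrow> real)
    \<Rightarrow> nat \<Rightarrow> real^2 \<Rightarrow> 'a \<Rightarrow> real" where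
  "Yfield Xh Z \<alpha> n x \<omega> = max (Xfield Xh n x \<omega>) (Z n \<omega> powr (1 / \<alpha> x))"

end

(*
  Each Y_n(x) is a maximum of independent unit Frechet sources: Xh_n(x) with weight 2/3,
  Xh_{n-1}(x) with weight 1/3, and Z_n entering as Z_n^{1/alpha(x)}. Hence for every pair the
  probability that both lie below y is exp (- s_J(y)), where s_J sums, over the sources, the larger
  of the two contributions c/y (for weight c) resp. y^{-alpha(x)}; in particular the marginals
  are exp (- s(y)) with s(y) = 1/y + y^{-alpha(x)}. As all exponents tend to 0, the tail dependence
  coefficient is lim (s_U + s_V - s_J) / s_U. Without a shared source this is 0. For
  Y_{n+1}(x), Y_n(x) the shared Xh_n(x) gives (1/(3y)) / s(y), for Y_n(x'), Y_n(x) the shared Z_n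
  gives min (y^{-alpha(x)}, y^{-alpha(x')}) / s(y), and (1/y) / s(y) tends to 0, 1/2 or 1
  according as alpha(x) < 1, = 1 or > 1.
*)

theory Submission
  imports Defs "HOL-Real_Asymp.Real_Asymp"
begin

definition share_limit :: "real \<Rightarrow> real" where
  "share_limit a = (if a < 1 then 0 else if a = 1 then 1/2 else 1)"

lemma tendsto_share_limit:
  fixes a :: real
  assumes "a > 0"
  shows "((\<lambda>y. (1/y) / (1/y + y powr -a)) \<longlongrightarrow> share_limit a) at_top"
  unfolding share_limit_def using assms by (cases a "1::real" rule: linorder_cases) (simp; real_asymp)+

lemma tendsto_exponent:
  fixes a :: real
  assumes "a > 0"
  shows "((\<lambda>y. 1 / y + y powr - a) \<longlongrightarrow> 0) at_top"
proof (rule tendsto_add_zero)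
  show "((\<lambda>y::real. y powr - a) \<longlongrightarrow> 0) at_top"
    using assms by (intro tendsto_neg_powr filterlim_ident) auto
qed real_asymp

lemma exponent_pos: "y > 0 \<Longrightarrow> 0 < 1 / y + y powr - (a::real)"
  by (simp add: add_pos_pos)

lemma tendsto_exp_ratio:
  fixes d s :: "'b \<Rightarrow> real"
  assumes "(d \<longlongrightarrow> 0) F" "(s \<longlongrightarrow> 0) F" "\<forall>\<^sub>F y in F. s y > 0"
    and "((\<lambda>y. d y / s y) \<longlongrightarrow> c) F"
  shows "((\<lambda>y. (1 - exp (- d y)) / (1 - exp (- s y))) \<longlongrightarrow> c) F"
proof -
  \<comment> \<open>g extends (1 - e^{-t}) / t continuously to 0, which covers the points where d vanishes.\<close>
  define g :: "real \<Rightarrow> real" where "g t = (if t = 0 then 1 else (1 - exp (- t)) / t)" for t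
  have "((\<lambda>t::real. (1 - exp (- t)) / t) \<longlongrightarrow> 1) (at 0)"
    by real_asymp
  then have "(g \<longlongrightarrow> 1) (at 0)"
    by (rule Lim_transform_eventually) (simp add: g_def eventually_at_filter)
  then have "isCont g 0"
    by (simp add: isCont_def g_def)
  then have "((\<lambda>y. g (d y) * (d y / s y) / g (s y)) \<longlongrightarrow> g 0 * c / g 0) F"
    using assms by (intro tendsto_intros isCont_tendsto_compose[of 0 g]) (auto simp: g_def)
  then have lim: "((\<lambda>y. g (d y) * (d y / s y) / g (s y)) \<longlongrightarrow> c) F"
    by (simp add: g_def)
  have "g (d y) * (d y / s y) / g (s y) = (1 - exp (- d y)) / (1 - exp (- s y))" if "s y > 0" for y
    using that by (simp add: g_def field_simps)
  with assms(3) show ?thesis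
    by (intro Lim_transform_eventually[OF lim]) (auto elim: eventually_mono)
qed

context prob_space
begin

lemma prob_both_gt:
  fixes U V :: "'a \<Rightarrow> real"
  assumes "U \<in> borel_measurable M" "V \<in> borel_measurable M"
  shows "\<P>(\<omega> in M. V \<omega> > y \<and> U \<omega> > y) = 1 - \<P>(\<omega> in M. V \<omega> \<le> y)
     - \<P>(\<omega> in M. U \<omega> \<le> y) + \<P>(\<omega> in M. V \<omega> \<le> y \<and> U \<omega> \<le> y)"
proof -
  let ?A = "{\<omega> \<in> space M. V \<omega> \<le> y}" and ?B = "{\<omega> \<in> space M. U \<omega> \<le> y}"
  have events: "?A \<in> events" "?B \<in> events"
    using measurable_sets[OF assms(2) atMost_borel] measurable_sets[OF assms(1) atMost_borel]
    by (simp_all add: vimage_def Int_def conj_commute)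
  have "{\<omega> \<in> space M. V \<omega> > y \<and> U \<omega> > y} = space M - (?A \<union> ?B)"
    by auto
  then have "\<P>(\<omega> in M. V \<omega> > y \<and> U \<omega> > y) = 1 - prob (?A \<union> ?B)"
    using events by (simp add: prob_compl)
  also have "prob (?A \<union> ?B) = prob ?A + prob ?B - prob (?B \<inter> ?A)"
    using events by (simp add: finite_measure_Union' finite_measure_Diff')
  also have "?B \<inter> ?A = {\<omega> \<in> space M. V \<omega> \<le> y \<and> U \<omega> \<le> y}"
    by auto
  finally show ?thesis
    by simp
qed

text \<open>The numerator P(V > y, U > y) equals (1 - e^{-sU}) - e^{-sV} (1 - e^{-(sJ - sV)}), and
  (1 - e^{-d}) / (1 - e^{-s}) behaves like d / s as d, s tend to 0.\<close>

lemma tail_dep_from_exponents: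
  fixes U V :: "'a \<Rightarrow> real" and sU sV sJ :: "real \<Rightarrow> real"
  assumes "U \<in> borel_measurable M" "V \<in> borel_measurable M"
    and cdf: "\<forall>\<^sub>F y in at_top. \<P>(\<omega> in M. U \<omega> \<le> y) = exp (- sU y)
       \<and> \<P>(\<omega> in M. V \<omega> \<le> y) = exp (- sV y)
       \<and> \<P>(\<omega> in M. V \<omega> \<le> y \<and> U \<omega> \<le> y) = exp (- sJ y)"
    and pos: "\<forall>\<^sub>F y in at_top. sU y > 0"
    and "(sU \<longlongrightarrow> 0) at_top" "(sV \<longlongrightarrow> 0) at_top" "(sJ \<longlongrightarrow> 0) at_top"
    and "((\<lambda>y. (sJ y - sV y) / sU y) \<longlongrightarrow> c) at_top"
  shows "tail_dep M V U (1 - c)"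
proof -
  have "((\<lambda>y. sJ y - sV y) \<longlongrightarrow> 0 - 0) at_top"
    using assms by (intro tendsto_diff)
  then have "((\<lambda>y. 1 - exp (- sV y) * ((1 - exp (- (sJ y - sV y))) / (1 - exp (- sU y))))
      \<longlongrightarrow> 1 - exp (- 0) * c) at_top"
    using assms by (intro tendsto_intros tendsto_exp_ratio) auto
  moreover have "\<forall>\<^sub>F y in at_top. 1 - exp (- sV y) * ((1 - exp (- (sJ y - sV y))) / (1 - exp (- sU y)))
      = \<P>(\<omega> in M. V \<omega> > y \<and> U \<omega> > y) / \<P>(\<omega> in M. U \<omega> > y)"
    using cdf pos
  proof eventually_elim
    case (elim y)
    define eD where "eD = exp (- (sJ y - sV y))"
    have "exp (- sJ y) = exp (- sV y) * eD"
      by (simp add: eD_def exp_add[symmetric])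
    then have both: "\<P>(\<omega> in M. V \<omega> > y \<and> U \<omega> > y)
        = 1 - exp (- sV y) - exp (- sU y) + exp (- sV y) * eD"
      using elim prob_both_gt[OF assms(1,2), of y] by simp
    have "\<P>(\<omega> in M. U \<omega> > y) = 1 - exp (- sU y)"
      using elim prob_both_gt[OF assms(1) assms(1), of y] by simp
    moreover have "1 - exp (- sU y) \<noteq> 0"
      using elim by simp
    ultimately show ?case
      unfolding eD_def[symmetric] both by (simp add: field_simps)
  qed
  ultimately show ?thesis
    unfolding tail_dep_def by (simp add: Lim_transform_eventually)
qed

lemma std_frechet_AE_pos:
  assumes "std_frechet M V"
  shows "AE \<omega> in M. 0 < V \<omega>"
proof -
  have meas: "V \<in> borel_measurable M"
    using assms by (simp add: std_frechet_def)
  have small: "\<P>(\<omega> in M. V \<omega> \<le> 0) \<le> e" if "e > 0" for e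
  proof -
    have "\<P>(\<omega> in M. V \<omega> \<le> 0) \<le> \<P>(\<omega> in M. V \<omega> \<le> e)"
      using meas that by (intro finite_measure_mono) auto
    also have "\<dots> = 1 / exp (1 / e)"
      using assms that by (simp add: std_frechet_def exp_minus inverse_eq_divide)
    also have "\<dots> \<le> e"
    proof -
      have "1 / e \<le> exp (1 / e)"
        using exp_ge_add_one_self[of "1 / e"] by linarith
      then have "1 \<le> e * exp (1 / e)"
        using that by (simp add: divide_le_eq mult.commute)
      then show ?thesis
        by (simp add: pos_divide_le_eq)
    qed
    finally show ?thesis
      by simp
  qed
  have "\<P>(\<omega> in M. V \<omega> \<le> 0) \<le> 0"
    by (rule field_le_epsilon) (simp add: small)
  then have "\<P>(\<omega> in M. V \<omega> \<le> 0) = 0"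
    by (simp add: antisym measure_nonneg)
  then show ?thesis
    using meas by (subst (asm) prob_Collect_eq_0) (auto simp: not_le)
qed

lemma prob_std_frechet_in:
  assumes "std_frechet M V" "S \<in> sets borel" "c \<ge> 0"
    and S: "S \<inter> {0<..} = {w. 0 < w \<and> c * w \<le> 1}"
  shows "\<P>(\<omega> in M. V \<omega> \<in> S) = exp (- c)"
proof -
  have meas: "V \<in> borel_measurable M"
    using assms by (simp add: std_frechet_def)
  have "AE \<omega> in M. V \<omega> \<in> S \<longleftrightarrow> c * V \<omega> \<le> 1"
    using std_frechet_AE_pos[OF assms(1)] by eventually_elim (use S in blast)
  then have "\<P>(\<omega> in M. V \<omega> \<in> S) = \<P>(\<omega> in M. c * V \<omega> \<le> 1)"
    using meas measurable_sets[OF meas assms(2)] by (intro prob_eq_AE) (auto simp: vimage_def Int_def conj_commute)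
  also have "\<dots> = exp (- c)"
  proof (cases "c = 0")
    case False
    then have "\<P>(\<omega> in M. c * V \<omega> \<le> 1) = \<P>(\<omega> in M. V \<omega> \<le> 1 / c)"
      using assms(3) by (simp add: mult.commute pos_le_divide_eq)
    then show ?thesis
      using assms(1,3) False by (simp add: std_frechet_def)
  qed (simp add: prob_space)
  finally show ?thesis .
qed

end

lemma powr_inverse_le_iff:
  fixes a y z :: real
  assumes "a > 0" "y > 0" "z > 0"
  shows "z powr (1 / a) \<le> y \<longleftrightarrow> z \<le> y powr a"
proof
  assume "z powr (1 / a) \<le> y"
  then have "(z powr (1 / a)) powr a \<le> y powr a"
    using assms by (intro powr_mono2) auto
  then show "z \<le> y powr a"
    using assms by (simp add: powr_powr)
next
  assume "z \<le> y powr a"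
  then have "z powr (1 / a) \<le> (y powr a) powr (1 / a)"
    using assms by (intro powr_mono2) auto
  then show "z powr (1 / a) \<le> y"
    using assms by (simp add: powr_powr)
qed

type_synonym source_index = "(nat \<times> (real^2)) + nat"

locale frechet_max_field = prob_space M for M :: "'a measure" +
  fixes Xh :: "nat \<Rightarrow> real^2 \<Rightarrow> 'a \<Rightarrow> real" and Z :: "nat \<Rightarrow> 'a \<Rightarrow> real"
    and \<alpha> :: "real^2 \<Rightarrow> real"
  assumes indep_sources: "indep_vars (\<lambda>_. borel) (\<lambda>i. case i of Inl (n, x) \<Rightarrow> Xh n x | Inr n \<Rightarrow> Z n)
      (range Inl \<union> Inr ` {1..})"
    and std_frechet_Xh: "\<And>n x. std_frechet M (Xh n x)"
    and std_frechet_Z: "\<And>n. n \<ge> 1 \<Longrightarrow> std_frechet M (Z n)"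
    and alpha_pos: "\<And>x. \<alpha> x > 0"
begin

definition source :: "source_index \<Rightarrow> 'a \<Rightarrow> real" where
  "source i = (case i of Inl (n, x) \<Rightarrow> Xh n x | Inr n \<Rightarrow> Z n)"

abbreviation sources :: "source_index set" where
  "sources \<equiv> range Inl \<union> Inr ` {1..}"

abbreviation Y :: "nat \<Rightarrow> real^2 \<Rightarrow> 'a \<Rightarrow> real" where
  "Y \<equiv> Yfield Xh Z \<alpha>"

lemma std_frechet_source: "i \<in> sources \<Longrightarrow> std_frechet M (source i)"
  by (auto simp: source_def std_frechet_Xh std_frechet_Z)

lemma Y_measurable:
  assumes "n \<ge> 1"
  shows "Y n x \<in> borel_measurable M"
proof -
  have [measurable]: "Xh k z \<in> borel_measurable M" "Z n \<in> borel_measurable M" for k z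
    using std_frechet_Xh std_frechet_Z[OF assms] by (auto simp: std_frechet_def)
  show ?thesis
    unfolding Yfield_def Xfield_def by measurable
qed

lemma prob_all_sources:
  assumes "finite J" "J \<subseteq> sources" "\<And>j. j \<in> J \<Longrightarrow> B j \<in> sets borel"
  shows "\<P>(\<omega> in M. \<forall>j\<in>J. source j \<omega> \<in> B j) = (\<Prod>j\<in>J. \<P>(\<omega> in M. source j \<omega> \<in> B j))"
proof (cases "J = {}")
  case False
  have "indep_sets (\<lambda>i. {source i -` A \<inter> space M | A. A \<in> sets borel}) sources"
    using indep_sources unfolding indep_vars_def2 source_def[abs_def] by simp
  from indep_setsD[OF this assms(2) False assms(1), of "\<lambda>j. source j -` B j \<inter> space M"]
  have "prob (\<Inter>j\<in>J. source j -` B j \<inter> space M) = (\<Prod>j\<in>J. prob (source j -` B j \<inter> space M))"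
    using assms(3) by blast
  moreover have "(\<Inter>j\<in>J. source j -` B j \<inter> space M) = {\<omega> \<in> space M. \<forall>j\<in>J. source j \<omega> \<in> B j}"
    using False by auto
  ultimately show ?thesis
    by (simp add: vimage_def Int_def conj_commute)
qed (simp add: prob_space)

text \<open>Y_n(x) \<le> y holds iff every source i lies in its level set, and then
  P(Y_n(x) \<le> y) = exp (- \<Sum>i rate n x y i). The level set of Z_n is stated via powr, not as
  Z_n \<le> y^\<alpha>(x), because powr of a negative number is a junk value; only its positive part,
  which carries all the probability, has the clean form of lemma level_set_pos.\<close>

definition inputs :: "nat \<Rightarrow> real^2 \<Rightarrow> source_index set" where
  "inputs n x = {Inl (n, x), Inl (n - 1, x), Inr n}"

definition rate :: "nat \<Rightarrow> real^2 \<Rightarrow> real \<Rightarrow> source_index \<Rightarrow> real" where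
  "rate n x y i = (case i of
      Inl (k, z) \<Rightarrow> if z = x \<and> k = n then 2 / (3 * y) else if z = x \<and> k = n - 1 then 1 / (3 * y) else 0
    | Inr k \<Rightarrow> if k = n then y powr - \<alpha> x else 0)"

definition level_set :: "nat \<Rightarrow> real^2 \<Rightarrow> real \<Rightarrow> source_index \<Rightarrow> real set" where
  "level_set n x y i = (case i of
      Inl _ \<Rightarrow> {w. rate n x y i * w \<le> 1}
    | Inr k \<Rightarrow> if k = n then {z. z powr (1 / \<alpha> x) \<le> y} else UNIV)"

lemma finite_inputs: "finite (inputs n x)"
  by (simp add: inputs_def)

lemma inputs_disjoint:
  "n \<ge> 1 \<Longrightarrow> r \<ge> 1 \<Longrightarrow> r > 1 \<or> x \<noteq> x' \<Longrightarrow> inputs (n + r) x' \<inter> inputs n x = {}"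
  by (auto simp: inputs_def)

lemma rate_nonneg: "y > 0 \<Longrightarrow> 0 \<le> rate n x y i"
  by (auto simp: rate_def split: sum.split)

lemma rate_outside: "i \<notin> inputs n x \<Longrightarrow> rate n x y i = 0"
  by (auto simp: rate_def inputs_def split: sum.split)

lemma level_set_outside: "i \<notin> inputs n x \<Longrightarrow> level_set n x y i = UNIV"
  using rate_outside[of i n x y] by (auto simp: level_set_def inputs_def split: sum.split)

lemma level_set_borel: "level_set n x y i \<in> sets borel"
proof -
  have "Measurable.pred borel (\<lambda>w::real. c * w \<le> 1)" for c
    by measurable
  moreover have "Measurable.pred borel (\<lambda>z::real. z powr (1 / \<alpha> x) \<le> y)"
    by measurable
  ultimately show ?thesis
    by (auto simp: level_set_def pred_def split: sum.split)
qed

lemma level_set_pos: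
  assumes "y > 0"
  shows "level_set n x y i \<inter> {0<..} = {w. 0 < w \<and> rate n x y i * w \<le> 1}"
proof -
  have "z powr (1 / \<alpha> x) \<le> y \<longleftrightarrow> y powr - \<alpha> x * z \<le> 1" if "z > 0" for z
    using powr_inverse_le_iff[OF alpha_pos[of x] assms that] assms
    by (simp add: powr_minus divide_inverse[symmetric] divide_le_eq mult.commute)
  then show ?thesis
    by (auto simp: level_set_def rate_def split: sum.split)
qed

lemma Y_le_iff:
  assumes "n \<ge> 1" "y > 0"
  shows "Y n x \<omega> \<le> y \<longleftrightarrow> (\<forall>i\<in>inputs n x. source i \<omega> \<in> level_set n x y i)"
proof -
  have "n - 1 \<noteq> n"
    using assms by simp
  then show ?thesis
    using assms by (auto simp: Yfield_def Xfield_def inputs_def level_set_def rate_def source_def field_simps)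
qed

lemma prob_Y_le_Y_le:
  assumes "m \<ge> 1" "n \<ge> 1" "y > 0"
  shows "\<P>(\<omega> in M. Y m x' \<omega> \<le> y \<and> Y n x \<omega> \<le> y)
    = exp (- (\<Sum>i\<in>inputs m x' \<union> inputs n x. max (rate m x' y i) (rate n x y i)))"
proof -
  let ?J = "inputs m x' \<union> inputs n x"
  let ?B = "\<lambda>i. level_set m x' y i \<inter> level_set n x y i"
  have J: "finite ?J" "?J \<subseteq> sources"
    using assms by (auto simp: inputs_def)
  have "{\<omega> \<in> space M. Y m x' \<omega> \<le> y \<and> Y n x \<omega> \<le> y}
      = {\<omega> \<in> space M. \<forall>i\<in>?J. source i \<omega> \<in> ?B i}"
    using assms by (auto simp: Y_le_iff level_set_outside)
  then have "\<P>(\<omega> in M. Y m x' \<omega> \<le> y \<and> Y n x \<omega> \<le> y)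
      = (\<Prod>i\<in>?J. \<P>(\<omega> in M. source i \<omega> \<in> ?B i))"
    by (simp only:) (rule prob_all_sources[OF J], simp add: level_set_borel sets.Int)
  also have "\<dots> = (\<Prod>i\<in>?J. exp (- max (rate m x' y i) (rate n x y i)))"
  proof (rule prod.cong[OF refl], rule prob_std_frechet_in)
    fix i assume "i \<in> ?J"
    then show "std_frechet M (source i)"
      using J std_frechet_source by blast
    have "max a b * w \<le> 1 \<longleftrightarrow> a * w \<le> 1 \<and> b * w \<le> 1" if "w > 0" for a b w :: real
      using that by (simp add: max_mult_distrib_right)
    moreover have "?B i \<inter> {0<..} = (level_set m x' y i \<inter> {0<..}) \<inter> (level_set n x y i \<inter> {0<..})"
      by blast
    ultimately show "?B i \<inter> {0<..} = {w. 0 < w \<and> max (rate m x' y i) (rate n x y i) * w \<le> 1}"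
      unfolding level_set_pos[OF assms(3)] by blast
  qed (use assms rate_nonneg in \<open>auto simp: level_set_borel le_max_iff_disj\<close>)
  also have "\<dots> = exp (- (\<Sum>i\<in>?J. max (rate m x' y i) (rate n x y i)))"
    using J by (simp add: exp_sum sum_negf[symmetric])
  finally show ?thesis .
qed

lemma sum_rate: "n \<ge> 1 \<Longrightarrow> (\<Sum>i\<in>inputs n x. rate n x y i) = 1 / y + y powr - \<alpha> x"
  by (cases n) (auto simp: inputs_def rate_def)

lemma prob_Y_le:
  assumes "n \<ge> 1" "y > 0"
  shows "\<P>(\<omega> in M. Y n x \<omega> \<le> y) = exp (- (1 / y + y powr - \<alpha> x))"
  using prob_Y_le_Y_le[OF assms(1,1,2), of x x] sum_rate[OF assms(1), of x y] by simp

lemma tail_dep_Y: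
  assumes "m \<ge> 1" "n \<ge> 1"
    and joint: "\<And>y. y > 0 \<Longrightarrow>
      (\<Sum>i\<in>inputs m x' \<union> inputs n x. max (rate m x' y i) (rate n x y i)) = sJ y"
    and "(sJ \<longlongrightarrow> 0) at_top"
    and "((\<lambda>y. (sJ y - (1 / y + y powr - \<alpha> x')) / (1 / y + y powr - \<alpha> x)) \<longlongrightarrow> c) at_top"
  shows "tail_dep M (Y m x') (Y n x) (1 - c)"
proof (rule tail_dep_from_exponents[OF Y_measurable[OF assms(2)] Y_measurable[OF assms(1)]])
  show "\<forall>\<^sub>F y in at_top. \<P>(\<omega> in M. Y n x \<omega> \<le> y) = exp (- (1 / y + y powr - \<alpha> x))
      \<and> \<P>(\<omega> in M. Y m x' \<omega> \<le> y) = exp (- (1 / y + y powr - \<alpha> x'))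
      \<and> \<P>(\<omega> in M. Y m x' \<omega> \<le> y \<and> Y n x \<omega> \<le> y) = exp (- sJ y)"
    using eventually_gt_at_top[of 0]
    by eventually_elim (use assms in \<open>simp add: prob_Y_le prob_Y_le_Y_le\<close>)
  show "\<forall>\<^sub>F y in at_top. 0 < 1 / y + y powr - \<alpha> x"
    using eventually_gt_at_top[of 0] by eventually_elim (rule exponent_pos)
qed (use assms alpha_pos in \<open>auto intro: tendsto_exponent\<close>)

lemma tail_dep_Y_disjoint:
  assumes "m \<ge> 1" "n \<ge> 1" and disj: "inputs m x' \<inter> inputs n x = {}"
  shows "tail_dep M (Y m x') (Y n x) 0"
proof -
  let ?sU = "\<lambda>y. 1 / y + y powr - \<alpha> x" and ?sV = "\<lambda>y. 1 / y + y powr - \<alpha> x'"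
  have "(\<Sum>i\<in>inputs m x' \<union> inputs n x. max (rate m x' y i) (rate n x y i)) = ?sV y + ?sU y"
    if "y > 0" for y
  proof -
    have "rate n x y i = 0" if "i \<in> inputs m x'" for i
      using disj that by (intro rate_outside) blast
    then have sum_left: "(\<Sum>i\<in>inputs m x'. max (rate m x' y i) (rate n x y i)) = ?sV y"
      using assms(1) by (simp add: max_absorb1 rate_nonneg[OF that] sum_rate[symmetric] cong: sum.cong)
    have "rate m x' y i = 0" if "i \<in> inputs n x" for i
      using disj that by (intro rate_outside) blast
    then have sum_right: "(\<Sum>i\<in>inputs n x. max (rate m x' y i) (rate n x y i)) = ?sU y"
      using assms(2) by (simp add: max_absorb2 rate_nonneg[OF that] sum_rate[symmetric] cong: sum.cong)
    show ?thesis
      unfolding sum.union_disjoint[OF finite_inputs finite_inputs disj] sum_left sum_right ..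
  qed
  moreover have "((\<lambda>y. (?sV y + ?sU y - ?sV y) / ?sU y) \<longlongrightarrow> 1) at_top"
  proof (rule Lim_transform_eventually[OF tendsto_const])
    show "\<forall>\<^sub>F y in at_top. 1 = (?sV y + ?sU y - ?sV y) / ?sU y"
      using eventually_gt_at_top[of 0]
      by eventually_elim (use exponent_pos[of _ "\<alpha> x"] in fastforce)
  qed
  moreover have "((\<lambda>y. ?sV y + ?sU y) \<longlongrightarrow> 0) at_top"
    using alpha_pos by (intro tendsto_add_zero tendsto_exponent)
  ultimately have "tail_dep M (Y m x') (Y n x) (1 - 1)"
    using assms by (intro tail_dep_Y)
  then show ?thesis
    by simp
qed

lemma tail_dep_Y_next:
  assumes "n \<ge> 1"
  shows "tail_dep M (Y (n + 1) x) (Y n x) (share_limit (\<alpha> x) / 3)"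
proof -
  let ?s = "\<lambda>y. 1 / y + y powr - \<alpha> x" and ?sJ = "\<lambda>y. 5 / (3 * y) + 2 * y powr - \<alpha> x"
  have "(\<Sum>i\<in>inputs (n + 1) x \<union> inputs n x. max (rate (n + 1) x y i) (rate n x y i)) = ?sJ y"
    if "y > 0" for y
  proof -
    have "inputs (n + 1) x \<union> inputs n x = {Inl (n + 1, x), Inl (n, x), Inl (n - 1, x), Inr (n + 1), Inr n}"
      by (auto simp: inputs_def)
    then show ?thesis
      using assms that by (cases n) (simp_all add: rate_def field_simps)
  qed
  moreover have "(?sJ \<longlongrightarrow> 0) at_top"
  proof (rule tendsto_add_zero)
    show "((\<lambda>y. 2 * y powr - \<alpha> x) \<longlongrightarrow> 0) at_top"
      using alpha_pos[of x] by (intro tendsto_mult_right_zero tendsto_neg_powr filterlim_ident) auto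
  qed real_asymp
  moreover have "((\<lambda>y. (?sJ y - ?s y) / ?s y) \<longlongrightarrow> 1 - 1/3 * share_limit (\<alpha> x)) at_top"
  proof (rule Lim_transform_eventually)
    show "((\<lambda>y. 1 - 1/3 * ((1 / y) / ?s y)) \<longlongrightarrow> 1 - 1/3 * share_limit (\<alpha> x)) at_top"
      using alpha_pos by (intro tendsto_intros tendsto_share_limit)
    show "\<forall>\<^sub>F y in at_top. 1 - 1/3 * ((1 / y) / ?s y) = (?sJ y - ?s y) / ?s y"
      using eventually_gt_at_top[of 0]
    proof eventually_elim
      case (elim y)
      then have ne: "?s y \<noteq> 0"
        using exponent_pos[OF elim, of "\<alpha> x"] by simp
      have eq: "?sJ y - ?s y = ?s y - 1/3 * (1 / y)"
        by simp
      show ?case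
        by (simp only: eq diff_divide_distrib divide_self[OF ne] times_divide_eq_right)
    qed
  qed
  ultimately have "tail_dep M (Y (n + 1) x) (Y n x) (1 - (1 - 1/3 * share_limit (\<alpha> x)))"
    using assms by (intro tail_dep_Y) auto
  then show ?thesis
    by simp
qed

lemma tail_dep_Y_same_time:
  assumes "n \<ge> 1" "x \<noteq> x'"
  shows "tail_dep M (Y n x') (Y n x) (if \<alpha> x' \<le> \<alpha> x then 1 - share_limit (\<alpha> x) else 0)"
proof -
  let ?sU = "\<lambda>y. 1 / y + y powr - \<alpha> x" and ?sV = "\<lambda>y. 1 / y + y powr - \<alpha> x'"
  let ?sJ = "\<lambda>y. 2 / y + max (y powr - \<alpha> x') (y powr - \<alpha> x)"
  have joint: "(\<Sum>i\<in>inputs n x' \<union> inputs n x. max (rate n x' y i) (rate n x y i)) = ?sJ y"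
    if "y > 0" for y
  proof -
    have "inputs n x' \<union> inputs n x = {Inl (n, x'), Inl (n - 1, x'), Inl (n, x), Inl (n - 1, x), Inr n}"
      by (auto simp: inputs_def)
    then show ?thesis
      using assms that by (cases n) (simp_all add: rate_def field_simps)
  qed
  have lim_sJ: "(?sJ \<longlongrightarrow> 0) at_top"
  proof (rule tendsto_add_zero)
    have "((\<lambda>y. max (y powr - \<alpha> x') (y powr - \<alpha> x)) \<longlongrightarrow> max 0 0) at_top"
      using alpha_pos by (intro tendsto_max tendsto_neg_powr filterlim_ident) auto
    then show "((\<lambda>y. max (y powr - \<alpha> x') (y powr - \<alpha> x)) \<longlongrightarrow> 0) at_top"
      by simp
  qed real_asymp
  have tail: "tail_dep M (Y n x') (Y n x) (1 - c)"
    if "((\<lambda>y. (?sJ y - ?sV y) / ?sU y) \<longlongrightarrow> c) at_top" for c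
    using assms(1) assms(1) joint lim_sJ that by (rule tail_dep_Y)
  show ?thesis
  proof (cases "\<alpha> x' \<le> \<alpha> x")
    case True
    have "\<forall>\<^sub>F y in at_top. (1 / y) / ?sU y = (?sJ y - ?sV y) / ?sU y"
      using eventually_gt_at_top[of 1] by eventually_elim (use True in \<open>simp add: max_def\<close>)
    with tendsto_share_limit[OF alpha_pos]
    have "((\<lambda>y. (?sJ y - ?sV y) / ?sU y) \<longlongrightarrow> share_limit (\<alpha> x)) at_top"
      by (rule Lim_transform_eventually)
    from tail[OF this] True show ?thesis
      by simp
  next
    case False
    have "((\<lambda>y. y powr - \<alpha> x' / ?sU y) \<longlongrightarrow> 0) at_top"
    proof (rule tendsto_sandwich[OF _ _ tendsto_const])
      show "\<forall>\<^sub>F y in at_top. 0 \<le> y powr - \<alpha> x' / ?sU y"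
        by (rule eventually_mono[OF eventually_gt_at_top[of 0]]) simp
      show "\<forall>\<^sub>F y in at_top. y powr - \<alpha> x' / ?sU y \<le> y powr (\<alpha> x - \<alpha> x')"
      proof (rule eventually_mono[OF eventually_gt_at_top[of 0]])
        fix y :: real
        assume y: "y > 0"
        have "y powr - \<alpha> x' / ?sU y \<le> y powr - \<alpha> x' / y powr - \<alpha> x"
          using y by (intro divide_left_mono) (auto intro!: mult_pos_pos add_pos_pos)
        also have "\<dots> = y powr (\<alpha> x - \<alpha> x')"
          by (simp add: powr_diff[symmetric])
        finally show "y powr - \<alpha> x' / ?sU y \<le> y powr (\<alpha> x - \<alpha> x')" .
      qed
      show "((\<lambda>y. y powr (\<alpha> x - \<alpha> x')) \<longlongrightarrow> 0) at_top"
        using False by (intro tendsto_neg_powr filterlim_ident) auto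
    qed
    then have "((\<lambda>y. 1 - y powr - \<alpha> x' / ?sU y) \<longlongrightarrow> 1 - 0) at_top"
      by (intro tendsto_diff tendsto_const)
    moreover have "\<forall>\<^sub>F y in at_top. 1 - y powr - \<alpha> x' / ?sU y = (?sJ y - ?sV y) / ?sU y"
      using eventually_gt_at_top[of 1]
    proof eventually_elim
      case (elim y)
      then have ne: "?sU y \<noteq> 0"
        using exponent_pos[of y "\<alpha> x"] by simp
      have eq: "?sJ y - ?sV y = ?sU y - y powr - \<alpha> x'"
        using elim False by (simp add: max_def)
      show ?case
        by (simp only: eq diff_divide_distrib divide_self[OF ne])
    qed
    ultimately have "((\<lambda>y. (?sJ y - ?sV y) / ?sU y) \<longlongrightarrow> 1) at_top"
      by (simp add: Lim_transform_eventually)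
    from tail[OF this] False show ?thesis
      by simp
  qed
qed

end

theorem mainTheorem3:
  fixes M :: "'a measure"
    and Xh :: "nat \<Rightarrow> real^2 \<Rightarrow> 'a \<Rightarrow> real"
    and Z :: "nat \<Rightarrow> 'a \<Rightarrow> real"
    and \<alpha> :: "real^2 \<Rightarrow> real"
  assumes "prob_space M"
    and "prob_space.indep_vars M (\<lambda>_. borel)
           (\<lambda>i. case i of Inl (n, x) \<Rightarrow> Xh n x | Inr n \<Rightarrow> Z n)
           (range Inl \<union> Inr ` {1..})"
    and "\<And>n x. std_frechet M (Xh n x)"
    and "\<And>n. n \<ge> 1 \<Longrightarrow> std_frechet M (Z n)"
    and "\<And>x. \<alpha> x > 0"
  shows "(\<forall>n\<ge>1. \<forall>x. \<forall>r\<ge>1.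
            tail_dep M (Yfield Xh Z \<alpha> (n + r) x) (Yfield Xh Z \<alpha> n x)
              (if \<alpha> x < 1 \<or> r > 1 then 0
               else if \<alpha> x = 1 then 1/6 else 1/3))
       \<and> (\<forall>n\<ge>1. \<forall>x x'. \<forall>r\<ge>1. x \<noteq> x' \<longrightarrow>
            tail_dep M (Yfield Xh Z \<alpha> (n + r) x') (Yfield Xh Z \<alpha> n x) 0)
       \<and> (\<forall>n\<ge>1. \<forall>x x'. x \<noteq> x' \<longrightarrow>
            tail_dep M (Yfield Xh Z \<alpha> n x') (Yfield Xh Z \<alpha> n x)
              (if \<alpha> x' \<le> \<alpha> x \<and> \<alpha> x < 1 then 1
               else if \<alpha> x' \<le> \<alpha> x \<and> \<alpha> x = 1 then 1/2 else 0))"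
proof -
  interpret frechet_max_field M Xh Z \<alpha>
    using assms by (simp add: frechet_max_field_def frechet_max_field_axioms_def)
  have "tail_dep M (Y (n + r) x) (Y n x) (if \<alpha> x < 1 \<or> r > 1 then 0 else if \<alpha> x = 1 then 1/6 else 1/3)"
    if "n \<ge> 1" "r \<ge> 1" for n r x
  proof (cases "r = 1")
    case True
    then have "(if \<alpha> x < 1 \<or> r > 1 then 0 else if \<alpha> x = 1 then 1/6 else 1/3) = share_limit (\<alpha> x) / 3"
      by (simp add: share_limit_def)
    with True show ?thesis
      using tail_dep_Y_next[OF that(1), of x] by (simp only:)
  next
    case False
    then show ?thesis
      using that tail_dep_Y_disjoint[OF _ that(1) inputs_disjoint[OF that]] by simp
  qed
  moreover have "tail_dep M (Y (n + r) x') (Y n x) 0" if "n \<ge> 1" "r \<ge> 1" "x \<noteq> x'" for n r x x'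
    using that by (intro tail_dep_Y_disjoint inputs_disjoint) auto
  moreover have "tail_dep M (Y n x') (Y n x)
      (if \<alpha> x' \<le> \<alpha> x \<and> \<alpha> x < 1 then 1 else if \<alpha> x' \<le> \<alpha> x \<and> \<alpha> x = 1 then 1/2 else 0)"
    if "n \<ge> 1" "x \<noteq> x'" for n x x'
  proof -
    have "(if \<alpha> x' \<le> \<alpha> x \<and> \<alpha> x < 1 then 1 else if \<alpha> x' \<le> \<alpha> x \<and> \<alpha> x = 1 then 1/2 else 0)
        = (if \<alpha> x' \<le> \<alpha> x then 1 - share_limit (\<alpha> x) else 0)"
      by (simp add: share_limit_def)
    with tail_dep_Y_same_time[OF that] show ?thesis
      by (simp only:)
  qed
  ultimately show ?thesis
    by blast
qed

end
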